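(* Let $\mathcal P=(S_1,\dots,S_n)$ be a partition of $V(G)$ into sets of size $r$ such that every $S_i$ is an independent set of $G$ (no edge of $G$ has both endpoints in the same $S_i$), and let $T=T_{\vec B,\mathcal P}$. Then $\mathbb E_{\vec B}(\xi)=0$, and hence $\mathbb E_{\vec B}(\hat t_{\mathrm{Neyman}})=\bar t$.
   Context: Let $n,p,q$ be positive integers, $r=p+q$, $G$ a finite simple graph with $|V(G)|=rn$ and no isolated vertices; $\mathcal N(v)$ neighbor set. For each $v$, $x_v,t_v\in\mathbb R$ and $f_v:2^{\mathcal N(v)}\to\mathbb R$ with $f_v(\emptyset)=0$; outcomes $y_v=x_v+\mathbf 1_T(v)t_v+f_v(T\cap\mathcal N(v))$; $\bar t=\frac1{rn}\sum_vt_v$. $\sigma_T(v)=q$ if $v\in T$, $-p$ otherwise; for $|T|=pn$, $\hat t_{\mathrm{Neyman}}=\frac1{pqn}\sum_v\sigma_T(v)y_v$ and $\xi=\frac1{pqn}\sum_v\sigma_T(v)f_v(T\cap\mathcal N(v))$. Restricted randomization: $S_i=\{w_i^1,\dots,w_i^r\}$, $B_1,\dots,B_n$ i.i.d. uniform $p$-subsets of $\{1,\dots,r\}$, $T_{\vec B,\mathcal P}=\{w_i^j:j\in B_i\}$. *)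

theory Defs
  imports "HOL-Probability.Probability"
begin

definition simple_graph :: "'v set \<Rightarrow> ('v \<Rightarrow> 'v \<Rightarrow> bool) \<Rightarrow> bool" where
  "simple_graph V E \<longleftrightarrow> finite V \<and> (\<forall>u v. E u v \<longrightarrow> u \<in> V \<and> v \<in> V)
     \<and> (\<forall>u v. E u v \<longrightarrow> E v u) \<and> (\<forall>v. \<not> E v v)"

definition nbhd :: "'v set \<Rightarrow> ('v \<Rightarrow> 'v \<Rightarrow> bool) \<Rightarrow> 'v \<Rightarrow> 'v set" where
  "nbhd V E v = {u \<in> V. E v u}"

definition outcome :: "'v set \<Rightarrow> ('v \<Rightarrow> 'v \<Rightarrow> bool) \<Rightarrow> ('v \<Rightarrow> real) \<Rightarrow> ('v \<Rightarrow> real)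
    \<Rightarrow> ('v \<Rightarrow> 'v set \<Rightarrow> real) \<Rightarrow> 'v set \<Rightarrow> 'v \<Rightarrow> real" where
  "outcome V E x t f T v = x v + (if v \<in> T then t v else 0) + f v (T \<inter> nbhd V E v)"

definition sigmaT :: "nat \<Rightarrow> nat \<Rightarrow> 'v set \<Rightarrow> 'v \<Rightarrow> real" where
  "sigmaT p q T v = (if v \<in> T then real q else - real p)"

definition neyman :: "'v set \<Rightarrow> ('v \<Rightarrow> 'v \<Rightarrow> bool) \<Rightarrow> nat \<Rightarrow> nat \<Rightarrow> nat \<Rightarrow> ('v \<Rightarrow> real)
    \<Rightarrow> ('v \<Rightarrow> real) \<Rightarrow> ('v \<Rightarrow> 'v set \<Rightarrow> real) \<Rightarrow> 'v set \<Rightarrow> real" where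
  "neyman V E n p q x t f T =
     (\<Sum>v\<in>V. sigmaT p q T v * outcome V E x t f T v) / (real p * real q * real n)"

definition xi :: "'v set \<Rightarrow> ('v \<Rightarrow> 'v \<Rightarrow> bool) \<Rightarrow> nat \<Rightarrow> nat \<Rightarrow> nat
    \<Rightarrow> ('v \<Rightarrow> 'v set \<Rightarrow> real) \<Rightarrow> 'v set \<Rightarrow> real" where
  "xi V E n p q f T =
     (\<Sum>v\<in>V. sigmaT p q T v * f v (T \<inter> nbhd V E v)) / (real p * real q * real n)"

definition tbar :: "'v set \<Rightarrow> nat \<Rightarrow> nat \<Rightarrow> ('v \<Rightarrow> real) \<Rightarrow> real" where
  "tbar V r n t = (\<Sum>v\<in>V. t v) / (real r * real n)"

definition Bvecs :: "nat \<Rightarrow> nat \<Rightarrow> nat \<Rightarrow> (nat \<Rightarrow> nat set) set" where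
  "Bvecs n r p = PiE {..<n} (\<lambda>_. {B. B \<subseteq> {1..r} \<and> card B = p})"

text \<open>Law of vec B: B_i i.i.d. uniform, i.e. uniform on Bvecs.\<close>
definition Bdist :: "nat \<Rightarrow> nat \<Rightarrow> nat \<Rightarrow> (nat \<Rightarrow> nat set) pmf" where
  "Bdist n r p = pmf_of_set (Bvecs n r p)"

text \<open>T_{B,P} = {w_i^j : j \<in> B_i}, with S_i = {w i j | j \<in> {1..r}}, i < n.\<close>
definition Tset :: "nat \<Rightarrow> (nat \<Rightarrow> nat \<Rightarrow> 'v) \<Rightarrow> (nat \<Rightarrow> nat set) \<Rightarrow> 'v set" where
  "Tset n w B = {w i j | i j. i < n \<and> j \<in> B i}"

end

theory Submission
  imports Defs
begin

text \<open>
  For a vertex \<open>v = w i j\<close>, the sign \<open>\<sigma>\<^sub>T(v)\<close> depends only on the block choice \<open>B i\<close>,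
  while \<open>T \<inter> N(v)\<close> depends only on the other blocks, because \<open>S\<^sub>i\<close> is independent.
  As the blocks are chosen independently and \<open>\<sigma>\<^sub>T(v)\<close> has mean \<open>q\<cdot>p/r - p\<cdot>q/r = 0\<close>,
  every interference term \<open>\<sigma>\<^sub>T(v) f\<^sub>v(T \<inter> N(v))\<close> has mean zero. What remains of
  \<open>\<sigma>\<^sub>T(v) y\<^sub>v\<close> is \<open>q t\<^sub>v 1\<^sub>T(v)\<close>, of mean \<open>p q t\<^sub>v / r\<close>.
\<close>

lemma card_subsets_containing:
  assumes "finite A" "a \<in> A" "k > 0"
  shows "card {B. B \<subseteq> A \<and> card B = k \<and> a \<in> B} = (card A - 1) choose (k - 1)"
proof -
  have "{B. B \<subseteq> A \<and> card B = k \<and> a \<in> B}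
      = insert a ` {C. C \<subseteq> A - {a} \<and> card C = k - 1}"
  proof (intro set_eqI iffI)
    fix B assume B: "B \<in> {B. B \<subseteq> A \<and> card B = k \<and> a \<in> B}"
    then have "B = insert a (B - {a})" and "card (B - {a}) = k - 1"
      using finite_subset[OF _ assms(1)] by auto
    with B show "B \<in> insert a ` {C. C \<subseteq> A - {a} \<and> card C = k - 1}" by blast
  next
    fix B assume "B \<in> insert a ` {C. C \<subseteq> A - {a} \<and> card C = k - 1}"
    then obtain C where "C \<subseteq> A - {a}" "card C = k - 1" "B = insert a C" by blast
    moreover have "finite C" "a \<notin> C"
      using \<open>C \<subseteq> A - {a}\<close> finite_subset[OF _ assms(1)] by auto
    ultimately show "B \<in> {B. B \<subseteq> A \<and> card B = k \<and> a \<in> B}"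
      using assms by auto
  qed
  moreover have "inj_on (insert a) {C. C \<subseteq> A - {a} \<and> card C = k - 1}"
    by (rule inj_onI) blast
  ultimately show ?thesis
    using assms by (simp add: card_image n_subsets)
qed

lemma card_mult_card_subsets_containing:
  assumes "finite A" "a \<in> A"
  shows "card A * card {B. B \<subseteq> A \<and> card B = k \<and> a \<in> B} = k * card {B. B \<subseteq> A \<and> card B = k}"
proof (cases "k = 0")
  case True
  then have "{B. B \<subseteq> A \<and> card B = k \<and> a \<in> B} = {}"
    using assms(1) finite_subset by fastforce
  then show ?thesis using True by (simp only: card.empty mult_0 mult_0_right)
next
  case False
  then show ?thesis
    using assms times_binomial_minus1_eq[of k "card A"]
    by (simp add: card_subsets_containing n_subsets)
qed

lemma sum_subsets_membership_sign:
  assumes "finite A" "a \<in> A" "card A = p + q"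
  shows "(\<Sum>B | B \<subseteq> A \<and> card B = p. if a \<in> B then real q else - real p) = 0"
proof -
  let ?S = "{B. B \<subseteq> A \<and> card B = p}"
  have fin: "finite ?S" using assms(1) by simp
  have "(\<Sum>B\<in>?S. if a \<in> B then real q else - real p)
      = (\<Sum>B\<in>?S. real (card A) * of_bool (a \<in> B) - real p)"
    using assms(3) by (intro sum.cong) auto
  also have "\<dots> = real (card A * card (?S \<inter> {B. a \<in> B})) - real (p * card ?S)"
    using fin by (simp add: sum_subtractf sum_distrib_left[symmetric])
  also have "?S \<inter> {B. a \<in> B} = {B. B \<subseteq> A \<and> card B = p \<and> a \<in> B}" by blast
  finally show ?thesis
    using card_mult_card_subsets_containing[OF assms(1,2)] by simp
qed

lemma sum_PiE_insert:
  assumes "i \<notin> J"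
  shows "(\<Sum>B\<in>PiE (insert i J) F. g B) = (\<Sum>y\<in>F i. \<Sum>B\<in>PiE J F. g (B(i := y)))"
  unfolding PiE_insert_eq
  by (subst sum.reindex[OF inj_combinator[OF assms]]) (simp add: sum.cartesian_product case_prod_beta)

text \<open>Counting form of \<open>E[a(B i) h(B)] = E[a(B i)] E[h(B)]\<close> for \<open>h\<close> ignoring coordinate \<open>i\<close>.\<close>

lemma sum_PiE_coordinate_factor:
  fixes a :: "'b \<Rightarrow> 'c::comm_semiring_1"
  assumes "finite I" "i \<in> I"
    and h_indep: "\<And>B y. B \<in> PiE I F \<Longrightarrow> y \<in> F i \<Longrightarrow> h (B(i := y)) = h B"
  shows "of_nat (card (F i)) * (\<Sum>B\<in>PiE I F. a (B i) * h B)
       = (\<Sum>y\<in>F i. a y) * (\<Sum>B\<in>PiE I F. h B)"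
proof (cases "F i = {}")
  case True
  then show ?thesis by simp
next
  case False
  then obtain c where c: "c \<in> F i" by blast
  define J where "J = I - {i}"
  have I: "I = insert i J" and "i \<notin> J" using assms(2) by (auto simp: J_def)
  have h_eq: "h (B(i := y)) = h (B(i := c))" if "B \<in> PiE J F" "y \<in> F i" for B y
  proof -
    have "B(i := y) \<in> PiE I F" using that I by (auto simp: PiE_def extensional_def)
    then show ?thesis using h_indep[of "B(i := y)" c] c by simp
  qed
  have "(\<Sum>B\<in>PiE I F. a (B i) * h B) = (\<Sum>y\<in>F i. a y) * (\<Sum>B\<in>PiE J F. h (B(i := c)))"
    unfolding I sum_PiE_insert[OF \<open>i \<notin> J\<close>]
    by (simp add: h_eq sum_distrib_left sum_distrib_right sum.swap[of _ "F i"])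
  moreover have "(\<Sum>B\<in>PiE I F. h B) = of_nat (card (F i)) * (\<Sum>B\<in>PiE J F. h (B(i := c)))"
    unfolding I sum_PiE_insert[OF \<open>i \<notin> J\<close>] by (simp add: h_eq)
  ultimately show ?thesis by (simp add: algebra_simps)
qed

lemma Bvecs_memD: "B \<in> Bvecs n r p \<Longrightarrow> k < n \<Longrightarrow> B k \<subseteq> {1..r}"
  by (auto simp: Bvecs_def PiE_def Pi_def)

lemma finite_Bvecs: "finite (Bvecs n r p)"
  by (simp add: Bvecs_def finite_PiE)

lemma Bvecs_nonempty: "p \<le> r \<Longrightarrow> Bvecs n r p \<noteq> {}"
  by (auto simp: Bvecs_def PiE_eq_empty_iff intro!: exI[of _ "{1..p}"])

lemma card_p_subsets_pos: "p \<le> r \<Longrightarrow> card {B. B \<subseteq> {1..r::nat} \<and> card B = p} > 0"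
  by (simp add: n_subsets)

lemma expectation_Bdist:
  "p \<le> r \<Longrightarrow> measure_pmf.expectation (Bdist n r p) g
     = (\<Sum>B\<in>Bvecs n r p. g B) / card (Bvecs n r p)"
  by (simp add: Bdist_def integral_pmf_of_set finite_Bvecs Bvecs_nonempty)

lemma Tset_mem_iff:
  assumes "inj_on (\<lambda>(i, j). w i j) ({..<n} \<times> {1..r})"
    and "\<forall>k<n. B k \<subseteq> {1..r}" "i < n" "j \<in> {1..r}"
  shows "w i j \<in> Tset n w B \<longleftrightarrow> j \<in> B i"
proof
  assume "w i j \<in> Tset n w B"
  then obtain k l where kl: "k < n" "l \<in> B k" "w i j = w k l" unfolding Tset_def by blast
  moreover have "l \<in> {1..r}" using assms(2) kl by blast
  ultimately have "(i, j) = (k, l)"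
    using assms by (intro inj_onD[OF assms(1)]) auto
  with kl show "j \<in> B i" by simp
qed (use assms in \<open>auto simp: Tset_def\<close>)

lemma Tset_update_inter_nbhd:
  assumes "\<forall>k\<in>{1..r}. \<not> E (w i j) (w i k)" "B i \<subseteq> {1..r}" "Y \<subseteq> {1..r}"
  shows "Tset n w (B(i := Y)) \<inter> nbhd V E (w i j) = Tset n w B \<inter> nbhd V E (w i j)"
proof -
  have drop_block: "Tset n w C \<inter> nbhd V E (w i j)
      = {w k l | k l. k < n \<and> k \<noteq> i \<and> l \<in> C k} \<inter> nbhd V E (w i j)"
    if "C i \<subseteq> {1..r}" for C
    using assms(1) that unfolding Tset_def nbhd_def by blast
  have "{w k l | k l. k < n \<and> k \<noteq> i \<and> l \<in> (B(i := Y)) k}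
      = {w k l | k l. k < n \<and> k \<noteq> i \<and> l \<in> B k}"
    by auto
  then show ?thesis
    using drop_block[of B] drop_block[of "B(i := Y)"] assms(2,3) by simp
qed

lemma sigmaT_Tset:
  assumes "inj_on (\<lambda>(i, j). w i j) ({..<n} \<times> {1..r})"
    and "B \<in> Bvecs n r p" "i < n" "j \<in> {1..r}"
  shows "sigmaT p q (Tset n w B) (w i j) = (if j \<in> B i then real q else - real p)"
  using Tset_mem_iff[OF assms(1) _ assms(3,4)] Bvecs_memD[OF assms(2)]
  by (simp add: sigmaT_def)

lemma sum_Bvecs_sigmaT_mult_interference:
  assumes inj: "inj_on (\<lambda>(i, j). w i j) ({..<n} \<times> {1..r})"
    and indep: "\<forall>i<n. \<forall>j\<in>{1..r}. \<forall>k\<in>{1..r}. \<not> E (w i j) (w i k)"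
    and "i < n" "j \<in> {1..r}" "r = p + q"
  shows "(\<Sum>B\<in>Bvecs n r p.
            sigmaT p q (Tset n w B) (w i j) * g (w i j) (Tset n w B \<inter> nbhd V E (w i j))) = 0"
proof -
  let ?F = "{B. B \<subseteq> {1..r} \<and> card B = p}"
  let ?h = "\<lambda>B. g (w i j) (Tset n w B \<inter> nbhd V E (w i j))"
  have "real (card ?F) * (\<Sum>B\<in>Bvecs n r p. (if j \<in> B i then real q else - real p) * ?h B)
      = (\<Sum>Y\<in>?F. if j \<in> Y then real q else - real p) * (\<Sum>B\<in>Bvecs n r p. ?h B)"
    unfolding Bvecs_def
  proof (rule sum_PiE_coordinate_factor)
    fix B Y assume "B \<in> PiE {..<n} (\<lambda>_. ?F)" "Y \<in> ?F"
    then show "?h (B(i := Y)) = ?h B"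
      using Tset_update_inter_nbhd[of r E w i j] indep assms(3,4) by (auto simp: PiE_def Pi_def)
  qed (use \<open>i < n\<close> in auto)
  also have "(\<Sum>Y\<in>?F. if j \<in> Y then real q else - real p) = 0"
    using sum_subsets_membership_sign[of "{1..r}" j p q] assms(4,5) by simp
  finally have "real (card ?F) * (\<Sum>B\<in>Bvecs n r p. (if j \<in> B i then real q else - real p) * ?h B) = 0"
    by simp
  moreover have "real (card ?F) \<noteq> 0"
    using card_p_subsets_pos[of p r] assms(5) by linarith
  moreover have "(\<Sum>B\<in>Bvecs n r p. sigmaT p q (Tset n w B) (w i j) * ?h B)
      = (\<Sum>B\<in>Bvecs n r p. (if j \<in> B i then real q else - real p) * ?h B)"
    by (rule sum.cong) (simp_all add: sigmaT_Tset[OF inj _ assms(3,4)])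
  ultimately show ?thesis by (simp only: mult_eq_0_iff) blast
qed

lemma sum_Bvecs_treated:
  assumes inj: "inj_on (\<lambda>(i, j). w i j) ({..<n} \<times> {1..r})"
    and "i < n" "j \<in> {1..r}" "p \<le> r"
  shows "real r * (\<Sum>B\<in>Bvecs n r p. of_bool (w i j \<in> Tset n w B))
       = real p * card (Bvecs n r p)"
proof -
  let ?F = "{B. B \<subseteq> {1..r} \<and> card B = p}"
  have mem: "w i j \<in> Tset n w B \<longleftrightarrow> j \<in> B i" if "B \<in> Bvecs n r p" for B
    using Tset_mem_iff[OF inj _ assms(2,3)] Bvecs_memD[OF that] by simp
  have "real (card ?F) * (\<Sum>B\<in>Bvecs n r p. of_bool (j \<in> B i) * 1)
      = (\<Sum>Y\<in>?F. of_bool (j \<in> Y)) * (\<Sum>B\<in>Bvecs n r p. 1)"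
    unfolding Bvecs_def by (rule sum_PiE_coordinate_factor) (use assms(2) in auto)
  then have "real (card ?F) * (\<Sum>B\<in>Bvecs n r p. of_bool (w i j \<in> Tset n w B))
      = real (card {B. B \<subseteq> {1..r} \<and> card B = p \<and> j \<in> B}) * card (Bvecs n r p)"
    by (simp add: mem Int_def conj_assoc cong: sum.cong)
  moreover have "real r * card {B. B \<subseteq> {1..r} \<and> card B = p \<and> j \<in> B} = real p * card ?F"
    using card_mult_card_subsets_containing[of "{1..r}" j p] assms(3)
    by (simp flip: of_nat_mult)
  ultimately have "real (card ?F) * (real r * (\<Sum>B\<in>Bvecs n r p. of_bool (w i j \<in> Tset n w B)))
      = real (card ?F) * (real p * card (Bvecs n r p))"
    by (simp add: algebra_simps)
  moreover have "real (card ?F) \<noteq> 0"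
    using card_p_subsets_pos[OF assms(4)] by linarith
  ultimately show ?thesis using mult_left_cancel by blast
qed

lemma sum_Bvecs_sigmaT_mult_outcome:
  assumes inj: "inj_on (\<lambda>(i, j). w i j) ({..<n} \<times> {1..r})"
    and indep: "\<forall>i<n. \<forall>j\<in>{1..r}. \<forall>k\<in>{1..r}. \<not> E (w i j) (w i k)"
    and "i < n" "j \<in> {1..r}" "r = p + q"
  shows "(\<Sum>B\<in>Bvecs n r p.
            sigmaT p q (Tset n w B) (w i j) * outcome V E x t f (Tset n w B) (w i j))
       = real p * real q / real r * card (Bvecs n r p) * t (w i j)"
proof -
  let ?v = "w i j" and ?T = "Tset n w"
  have "sigmaT p q (?T B) ?v * outcome V E x t f (?T B) ?v
      = sigmaT p q (?T B) ?v * (x ?v + f ?v (?T B \<inter> nbhd V E ?v))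
        + real q * t ?v * of_bool (?v \<in> ?T B)" for B
    by (simp add: outcome_def sigmaT_def algebra_simps)
  then have "(\<Sum>B\<in>Bvecs n r p. sigmaT p q (?T B) ?v * outcome V E x t f (?T B) ?v)
      = real q * t ?v * (\<Sum>B\<in>Bvecs n r p. of_bool (?v \<in> ?T B))"
    using sum_Bvecs_sigmaT_mult_interference[OF inj indep assms(3-5), of "\<lambda>v S. x v + f v S"]
    by (simp add: sum.distrib sum_distrib_left)
  also have "\<dots> = real q * t ?v * (real p * card (Bvecs n r p) / real r)"
    using sum_Bvecs_treated[OF inj assms(3,4), of p] assms(5)
    by (simp add: eq_divide_eq mult.commute)
  finally show ?thesis by (simp add: ac_simps)
qed

lemma sum_over_blocks:
  assumes "bij_betw (\<lambda>(i, j). w i j) ({..<n} \<times> {1..r}) V"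
  shows "(\<Sum>v\<in>V. \<phi> v) = (\<Sum>(i, j)\<in>{..<n} \<times> {1..r}. \<phi> (w i j))"
  using sum.reindex_bij_betw[OF assms, of \<phi>] by (simp add: case_prod_beta)

lemma sum_Bvecs_xi:
  assumes bij: "bij_betw (\<lambda>(i, j). w i j) ({..<n} \<times> {1..r}) V"
    and indep: "\<forall>i<n. \<forall>j\<in>{1..r}. \<forall>k\<in>{1..r}. \<not> E (w i j) (w i k)"
    and "r = p + q"
  shows "(\<Sum>B\<in>Bvecs n r p. xi V E n p q f (Tset n w B)) = 0"
proof -
  let ?T = "Tset n w"
  have "(\<Sum>B\<in>Bvecs n r p. xi V E n p q f (?T B))
      = (\<Sum>(i, j)\<in>{..<n} \<times> {1..r}. \<Sum>B\<in>Bvecs n r p.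
           sigmaT p q (?T B) (w i j) * f (w i j) (?T B \<inter> nbhd V E (w i j)))
        / (real p * real q * real n)"
    unfolding xi_def sum_divide_distrib[symmetric]
    by (subst sum.swap) (simp only: sum_over_blocks[OF bij])
  also have "\<dots> = 0"
    using sum_Bvecs_sigmaT_mult_interference[OF bij_betw_imp_inj_on[OF bij] indep _ _ assms(3)]
    by (simp add: sum.neutral case_prod_beta)
  finally show ?thesis .
qed

lemma sum_Bvecs_neyman:
  assumes bij: "bij_betw (\<lambda>(i, j). w i j) ({..<n} \<times> {1..r}) V"
    and indep: "\<forall>i<n. \<forall>j\<in>{1..r}. \<forall>k\<in>{1..r}. \<not> E (w i j) (w i k)"
    and "r = p + q" "n > 0" "p > 0" "q > 0"
  shows "(\<Sum>B\<in>Bvecs n r p. neyman V E n p q x t f (Tset n w B)) = card (Bvecs n r p) * tbar V r n t"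
proof -
  let ?T = "Tset n w"
  have "(\<Sum>B\<in>Bvecs n r p. neyman V E n p q x t f (?T B))
      = (\<Sum>(i, j)\<in>{..<n} \<times> {1..r}. \<Sum>B\<in>Bvecs n r p.
           sigmaT p q (?T B) (w i j) * outcome V E x t f (?T B) (w i j))
        / (real p * real q * real n)"
    unfolding neyman_def sum_divide_distrib[symmetric]
    by (subst sum.swap) (simp only: sum_over_blocks[OF bij])
  also have "\<dots> = (\<Sum>v\<in>V. real p * real q / real r * card (Bvecs n r p) * t v)
        / (real p * real q * real n)"
    unfolding sum_over_blocks[OF bij]
    by (intro arg_cong[where f = "\<lambda>s. s / _"] sum.cong)
      (auto simp: sum_Bvecs_sigmaT_mult_outcome[OF bij_betw_imp_inj_on[OF bij] indep _ _ assms(3)])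
  also have "\<dots> = card (Bvecs n r p) * tbar V r n t"
    using assms(4-6) unfolding tbar_def sum_distrib_left[symmetric] by (simp add: field_simps)
  finally show ?thesis .
qed

theorem mainTheorem11:
  fixes V :: "'v set" and E :: "'v \<Rightarrow> 'v \<Rightarrow> bool"
    and n p q r :: nat
    and x t :: "'v \<Rightarrow> real" and f :: "'v \<Rightarrow> 'v set \<Rightarrow> real"
    and w :: "nat \<Rightarrow> nat \<Rightarrow> 'v"
  assumes "n > 0" "p > 0" "q > 0" "r = p + q"
    and "simple_graph V E"
    and "card V = r * n"
    and "\<forall>v\<in>V. \<exists>u. E v u"
    and "\<forall>v\<in>V. f v {} = 0"
    and "bij_betw (\<lambda>(i, j). w i j) ({..<n} \<times> {1..r}) V"
    and "\<forall>i<n. \<forall>j\<in>{1..r}. \<forall>k\<in>{1..r}. \<not> E (w i j) (w i k)"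
  shows "measure_pmf.expectation (Bdist n r p) (\<lambda>B. xi V E n p q f (Tset n w B)) = 0
       \<and> measure_pmf.expectation (Bdist n r p) (\<lambda>B. neyman V E n p q x t f (Tset n w B))
           = tbar V r n t"
proof -
  have "p \<le> r" using assms(4) by simp
  then show ?thesis
    using sum_Bvecs_xi[OF assms(9,10,4)] sum_Bvecs_neyman[OF assms(9,10,4,1-3)]
    by (simp add: expectation_Bdist finite_Bvecs Bvecs_nonempty)
qed

end
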